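(* Let $\mathbf{F}_q$ have characteristic $p$, and let $D\subseteq\mathbf{F}_q$ with $|D|=q-1>4$. If $p$ is odd, then for every integer $k$ with $1<k<q-2$ and every $b\in\mathbf{F}_q$ there exist pairwise distinct $x_1,\dots,x_k\in D$ with $x_1+\dots+x_k=b$. If $p=2$, the same holds for every integer $k$ with $2<k<q-3$. *)

theory Defs
  imports Main "HOL-Library.Cardinality"
begin

end

theory Submission
  imports Defs
begin

(* Call a set S of nonzero field elements with sum 0 a zero-sum set.  The proof works
   entirely with such sets:
   - a zero-sum set of size k with 2k + 1 < q can be grown to size k + 1 (replace one
     element x by a pair y, x - y avoiding a few forbidden values);
   - since the elements of F_q sum to 0 (q > 2), the complement of a zero-sum set S in
     F_q - {0} is again a zero-sum set, of size q - 1 - |S|;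
   together, one zero-sum set of size k0 >= 1 yields zero-sum sets of every size k with
   k0 <= k <= q - 1 - k0.  Exchanging one element and rescaling turns a zero-sum set of
   size k < q - 1 into a set of nonzero elements of size k with any prescribed sum, and
   translating by the unique point d missing from D moves it into D.
   The theorem follows from the seed zero-sum sets {1, -1} (odd characteristic) and
   {1, c, 1 + c} with c not in {0, 1} (characteristic 2). *)

definition zero_sum_set :: "'a::field set \<Rightarrow> bool" where
  "zero_sum_set S \<longleftrightarrow> 0 \<notin> S \<and> (\<Sum>x\<in>S. x) = 0"

lemma exists_not_zero_one:
  assumes "CARD('a::{finite,field}) > 2"
  obtains c :: "'a::{finite,field}" where "c \<noteq> 0" "c \<noteq> 1"
proof -
  have "card (UNIV::'a set) > card {0::'a, 1}"
    using assms by (simp add: card_insert_le_m1 order.strict_trans1)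
  then have "\<not> (UNIV::'a set) \<subseteq> {0, 1}"
    by (meson card_mono finite leD)
  then show ?thesis using that by blast
qed

(* The elements of a finite field with more than two elements sum to zero:
   multiplication by any c \<notin> {0, 1} permutes the field and fixes the sum. *)
lemma sum_UNIV_field:
  assumes "CARD('a::{finite,field}) > 2"
  shows "(\<Sum>x\<in>(UNIV::'a set). x) = 0"
proof -
  obtain c :: 'a where c: "c \<noteq> 0" "c \<noteq> 1"
    using exists_not_zero_one[OF assms] .
  have "(\<Sum>x\<in>(UNIV::'a set). c * x) = (\<Sum>x\<in>UNIV. x)"
    by (rule sum.reindex_bij_witness[of _ "\<lambda>x. x / c" "\<lambda>x. c * x"]) (use c in auto)
  then have "c * (\<Sum>x\<in>(UNIV::'a set). x) = 1 * (\<Sum>x\<in>UNIV. x)"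
    by (simp add: sum_distrib_left)
  then have "(c - 1) * (\<Sum>x\<in>(UNIV::'a set). x) = 0"
    by (simp add: algebra_simps)
  then show ?thesis using c by simp
qed

(* Growing step: if 2k + 1 < q, a zero-sum set of size k \<ge> 1 can be enlarged by one.
   Pick x \<in> S and y outside S \<union> (x - S) \<union> {x/2}; then S - {x} \<union> {y, x - y} works. *)
lemma zero_sum_set_grow:
  fixes S :: "'a::{finite,field} set"
  assumes S: "zero_sum_set S" "card S = k" "1 \<le> k" and small: "2 * k + 1 < CARD('a)"
  shows "\<exists>T::'a set. zero_sum_set T \<and> card T = k + 1"
proof -
  from S obtain x where x: "x \<in> S" by fastforce
  define B where "B = S \<union> (\<lambda>s. x - s) ` S \<union> {x / 2}"
  have "card B \<le> card S + card ((\<lambda>s. x - s) ` S) + card {x / 2}"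
    unfolding B_def by (meson card_Un_le add_le_mono order_trans le_refl)
  also have "\<dots> \<le> k + k + 1"
    using S(2) card_image_le[of S "\<lambda>s. x - s"] by simp
  finally have "B \<noteq> UNIV" using small by auto
  then obtain y where y: "y \<notin> B" by blast
  have yS: "y \<notin> S" and xyS: "x - y \<notin> S" and y_half: "y \<noteq> x / 2"
    using y unfolding B_def by (auto simp: image_iff)
  have y0: "y \<noteq> 0" and xy0: "x - y \<noteq> 0"
    using x yS xyS by auto
  have y_xy: "y \<noteq> x - y"
  proof
    assume "y = x - y"
    then have "2 * y = x" by (simp add: algebra_simps mult_2)
    then show False
      using y_half x S(1) by (cases "(2::'a) = 0") (auto simp: zero_sum_set_def field_simps)
  qed
  define T where "T = insert y (insert (x - y) (S - {x}))"
  have "card T = k + 1"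
    unfolding T_def using x yS xyS y_xy S(2,3) by simp
  moreover have "(\<Sum>z\<in>T. z) = y + (x - y) + ((\<Sum>z\<in>S. z) - x)"
    unfolding T_def using x yS xyS y_xy by (simp add: sum_diff1)
  then have "zero_sum_set T"
    using S(1) y0 xy0 unfolding zero_sum_set_def T_def by auto
  ultimately show ?thesis by blast
qed

lemma zero_sum_set_grow_to:
  fixes S :: "'a::{finite,field} set"
  assumes S: "zero_sum_set S" "card S = k0" "1 \<le> k0"
    and "k0 \<le> k" "2 * k \<le> CARD('a)"
  shows "\<exists>T::'a set. zero_sum_set T \<and> card T = k"
  using assms(4,5)
proof (induction k rule: dec_induct)
  case base
  then show ?case using S by blast
next
  case (step n)
  then obtain T :: "'a set" where "zero_sum_set T" "card T = n" by auto
  then show ?case using zero_sum_set_grow[of T n] step S(3) by simp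
qed

lemma zero_sum_set_complement:
  fixes S :: "'a::{finite,field} set"
  assumes S: "zero_sum_set S" and q: "CARD('a) > 2"
  shows "zero_sum_set (UNIV - insert 0 S)" "card (UNIV - insert 0 S) = CARD('a) - 1 - card S"
proof -
  have "(\<Sum>x\<in>UNIV - insert 0 S. x) = (\<Sum>x\<in>UNIV. x) - (\<Sum>x\<in>insert 0 S. x)"
    by (rule sum_diff) auto
  then show "zero_sum_set (UNIV - insert 0 S)"
    using S sum_UNIV_field[OF q] by (simp add: zero_sum_set_def)
  have "card (UNIV - insert 0 S) = CARD('a) - card (insert 0 S)"
    by (rule card_Diff_subset) auto
  then show "card (UNIV - insert 0 S) = CARD('a) - 1 - card S"
    using S by (simp add: zero_sum_set_def)
qed

lemma zero_sum_set_sizes: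
  fixes S :: "'a::{finite,field} set"
  assumes S: "zero_sum_set S" "card S = k0" "1 \<le> k0" and q: "CARD('a) > 2"
    and k: "k0 \<le> k" "k \<le> CARD('a) - 1 - k0"
  shows "\<exists>T::'a set. zero_sum_set T \<and> card T = k"
proof (cases "2 * k \<le> CARD('a)")
  case True
  then show ?thesis using zero_sum_set_grow_to[OF S k(1)] by blast
next
  case False
  have j: "k0 \<le> CARD('a) - 1 - k" "2 * (CARD('a) - 1 - k) \<le> CARD('a)"
    and size_back: "CARD('a) - 1 - (CARD('a) - 1 - k) = k"
    using False k by auto
  obtain T :: "'a set" where T: "zero_sum_set T" "card T = CARD('a) - 1 - k"
    using zero_sum_set_grow_to[OF S j] by blast
  then show ?thesis
    using zero_sum_set_complement[OF T(1) q] T(2) size_back by metis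
qed

(* Exchange an element x \<in> S for y \<notin> S \<union> {0} (sum y - x \<noteq> 0), then rescale. *)
lemma nonzero_set_with_sum:
  fixes S :: "'a::{finite,field} set"
  assumes S: "zero_sum_set S" "card S = k" "1 \<le> k" "k < CARD('a) - 1"
  shows "\<exists>T::'a set. 0 \<notin> T \<and> card T = k \<and> (\<Sum>z\<in>T. z) = c"
proof (cases "c = 0")
  case True
  then show ?thesis using S unfolding zero_sum_set_def by blast
next
  case False
  from S obtain x where x: "x \<in> S" by fastforce
  have "card S < card (UNIV - {0::'a})"
    using S(2,4) by (simp add: card_Diff_singleton)
  then obtain y where y: "y \<noteq> 0" "y \<notin> S"
    by (metis Diff_iff card_mono finite insertI1 leD subsetI)
  define S' where "S' = insert y (S - {x})"
  have S': "0 \<notin> S'" "card S' = k" "(\<Sum>z\<in>S'. z) = y - x"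
    using x y S unfolding S'_def zero_sum_set_def by (auto simp: sum_diff1)
  have yx: "y - x \<noteq> 0" using x y by auto
  define a where "a = c / (y - x)"
  have a0: "a \<noteq> 0" using False yx unfolding a_def by simp
  have inj: "inj_on (\<lambda>z. a * z) S'" using a0 by (auto simp: inj_on_def)
  have "0 \<notin> (\<lambda>z. a * z) ` S'" using S'(1) a0 by auto
  moreover have "card ((\<lambda>z. a * z) ` S') = k" using card_image[OF inj] S'(2) by simp
  moreover have "(\<Sum>z\<in>(\<lambda>z. a * z) ` S'. z) = a * (y - x)"
    using sum.reindex[OF inj, of "\<lambda>z. z"] S'(3) by (simp add: sum_distrib_left[symmetric])
  then have "(\<Sum>z\<in>(\<lambda>z. a * z) ` S'. z) = c"
    using yx by (simp add: a_def)
  ultimately show ?thesis by blast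
qed

lemma card_eq_CARD_minus_one:
  assumes "card (D :: 'a::finite set) = CARD('a) - 1"
  obtains d :: "'a::finite" where "D = UNIV - {d}"
proof -
  have "D \<noteq> UNIV" using assms by (metis diff_less card_gt_0_iff finite UNIV_not_empty less_one less_irrefl)
  then obtain d where d: "d \<notin> D" by blast
  have "card (UNIV - {d}) = card D" using assms by (simp add: card_Diff_singleton)
  moreover have "D \<subseteq> UNIV - {d}" using d by auto
  ultimately have "D = UNIV - {d}" by (simp add: card_subset_eq)
  then show ?thesis using that by blast
qed

(* With D = F_q - {d}, translate by d a
   k-set of nonzero elements with sum b - k d. *)
lemma distinct_sum_from_zero_sum_set:
  fixes D S :: "'a::{finite,field} set"
  assumes D: "card D = CARD('a) - 1" and q: "CARD('a) > 2"
    and S: "zero_sum_set S" "card S = k0" "1 \<le> k0"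
    and k: "k0 \<le> k" "k \<le> CARD('a) - 1 - k0"
  shows "\<exists>xs. length xs = k \<and> distinct xs \<and> set xs \<subseteq> D \<and> sum_list xs = b"
proof -
  obtain d where Dd: "D = UNIV - {d}" using card_eq_CARD_minus_one[OF D] .
  obtain S0 :: "'a set" where S0: "zero_sum_set S0" "card S0 = k"
    using zero_sum_set_sizes[OF S q k] by blast
  have "1 \<le> k" "k < CARD('a) - 1" using S(3) k q by auto
  then obtain T where T: "0 \<notin> T" "card T = k" "(\<Sum>z\<in>T. z) = b - of_nat k * d"
    using nonzero_set_with_sum[OF S0] by blast
  define U where "U = (\<lambda>z. z + d) ` T"
  have inj: "inj_on (\<lambda>z. z + d) T" by (auto simp: inj_on_def)
  have U: "U \<subseteq> D" "card U = k" "(\<Sum>z\<in>U. z) = b"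
    unfolding U_def Dd using T card_image[OF inj] sum.reindex[OF inj, of "\<lambda>z. z"]
    by (auto simp: sum.distrib)
  obtain xs where "set xs = U" "distinct xs" using finite_distinct_list[of U] by auto
  then show ?thesis
    using U distinct_card[of xs] sum_list_distinct_conv_sum_set[of xs "\<lambda>z. z"] by auto
qed

lemma zero_sum_pair_odd_char:
  assumes "odd CHAR('a::field)"
  shows "zero_sum_set {1::'a, -1} \<and> card {1::'a, -1} = 2"
proof -
  have "(2::'a) \<noteq> 0"
  proof
    assume "(2::'a) = 0"
    then have "CHAR('a) dvd 2" by (metis of_nat_eq_0_iff_char_dvd of_nat_numeral)
    then have "CHAR('a) = 1 \<or> CHAR('a) = 2"
      using dvd_imp_le[of "CHAR('a)" 2] by (cases "CHAR('a)") auto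
    then show False using assms by auto
  qed
  then have "(1::'a) \<noteq> -1" by (metis one_add_one eq_neg_iff_add_eq_0)
  then show ?thesis by (simp add: zero_sum_set_def)
qed

lemma zero_sum_triple_char_2:
  assumes "CHAR('a::{finite,field}) = 2" and "CARD('a) > 2"
  obtains S :: "'a::{finite,field} set" where "zero_sum_set S" "card S = 3"
proof -
  obtain c :: 'a where c: "c \<noteq> 0" "c \<noteq> 1" using exists_not_zero_one[OF assms(2)] .
  have double: "z + z = 0" for z :: 'a
  proof -
    have "(2::'a) = 0" using assms(1) by (metis dvd_refl of_nat_eq_0_iff_char_dvd of_nat_numeral)
    then show ?thesis by (metis mult_2 mult_zero_left)
  qed
  have "1 + c \<noteq> 0" using c double[of 1] by (metis add_diff_cancel_left')
  moreover have "(\<Sum>x\<in>{1, c, 1 + c}. x) = (1 + c) + (1 + c)" using c by (simp add: algebra_simps)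
  ultimately have "zero_sum_set {1, c, 1 + c}" "card {1, c, 1 + c} = 3"
    using c double by (auto simp: zero_sum_set_def)
  then show ?thesis using that by blast
qed

theorem corollary2p8:
  fixes D :: "'a::{finite,field} set"
    and p q :: nat
  assumes "q = CARD('a)"
    and "p = CHAR('a)"
    and "card D = q - 1"
    and "q - 1 > 4"
  shows "(odd p \<longrightarrow>
           (\<forall>(k::nat) b. 1 < k \<and> k < q - 2 \<longrightarrow>
              (\<exists>xs :: 'a list. length xs = k \<and> distinct xs \<and> set xs \<subseteq> D
                  \<and> sum_list xs = b)))
       \<and> (p = 2 \<longrightarrow>
           (\<forall>(k::nat) b. 2 < k \<and> k < q - 3 \<longrightarrow>
              (\<exists>xs :: 'a list. length xs = k \<and> distinct xs \<and> set xs \<subseteq> D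
                  \<and> sum_list xs = b)))"
proof -
  have D: "card D = CARD('a) - 1" and q: "CARD('a) > 2" using assms by auto
  have odd_case: "\<exists>xs. length xs = k \<and> distinct xs \<and> set xs \<subseteq> D \<and> sum_list xs = b"
    if odd: "odd p" and k: "1 < k" "k < q - 2" for k b
  proof -
    have "zero_sum_set {1::'a, -1}" "card {1::'a, -1} = 2"
      using zero_sum_pair_odd_char odd assms(2) by auto
    then show ?thesis
      using distinct_sum_from_zero_sum_set[OF D q, of _ 2 k] k assms(1) by auto
  qed
  have char_2_case: "\<exists>xs. length xs = k \<and> distinct xs \<and> set xs \<subseteq> D \<and> sum_list xs = b"
    if p2: "p = 2" and k: "2 < k" "k < q - 3" for k b
  proof -
    obtain S :: "'a set" where "zero_sum_set S" "card S = 3"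
      using zero_sum_triple_char_2 q p2 assms(2) by metis
    then show ?thesis
      using distinct_sum_from_zero_sum_set[OF D q, of S 3 k] k assms(1) by auto
  qed
  show ?thesis using odd_case char_2_case by blast
qed

end
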